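(* For every kernel configuration $C$, the theory $T_\theta^C$ is inductive, i.e. the union of any chain of models of $T_\theta^C$ (under substructure) is a model of $T_\theta^C$.
   Context: Setting: $L$ is a first-order language, $T$ a model-complete $L$-theory and $K$ a field. There are $L$-formulas without parameters which define, in every model $\mathcal M\models T$, a nontrivial $K$-vector space $\mathbb V=\mathbb V^{\mathcal M}$; elements of $\mathbb V$ are treated as single elements. $L_\theta=L\cup\{\theta\}$, $\theta$ a new unary function symbol; $T_\theta$ is $T$ plus axioms saying $\theta|_{\mathbb V}$ is a $K$-linear endomorphism of $\mathbb V$ and $\theta(x)=0$ for $x\notin\mathbb V$. For $\rho=\sum_i(\rho)_iX^i\in K[X]$, $\rho[\theta]:=\sum_i(\rho)_i\theta^i$, $\mathrm{Ker}(\rho)=\{v\in\mathbb V:\rho[\theta](v)=0\}$. $K[X]_{\mathrm{irr}}$ is the set of monic irreducible polynomials. A kernel configuration is a pair $C=(c,d)$ with $c:K[X]_{\mathrm{irr}}\to\mathbb N\cup\{\infty\}$, $d\in\mathbb N_{>0}\cup\{\infty\}$ such that $d=\infty$ or $d=\sum_f\deg(f)c(f)$; write $C(f)=c(f)$. $C$ is algebraic if $d<\infty$, with $\mathrm{MiPo}(C)=\prod_ff^{C(f)}$, and transcendental otherwise. $\theta$ is a $C$-endomorphism if $\mathrm{Ker}(\mathrm{MiPo}(C))=\mathbb V$ (algebraic case), resp. $\mathrm{Ker}(f^{C(f)})=\mathrm{Ker}(f^{C(f)+1})$ for all $f$ with $C(f)<\infty$ (transcendental case). $T^C_\theta:=T_\theta\cup\{\theta|_{\mathbb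 V}\text{ is a }C\text{-endomorphism}\}$. *)

theory Defs
  imports "HOL-Computational_Algebra.Polynomial" "HOL-Computational_Algebra.Factorial_Ring"
          "HOL-Library.Extended_Nat"
begin

text \<open>A first-order language L is given by a type of function symbols 'f with arities
  fa :: 'f => nat (constants have arity 0) and a type of relation symbols 'r with arities
  ra :: 'r => nat.\<close>

datatype 'f trm = Var nat | Fn 'f "'f trm list"

datatype ('f, 'r) fm =
    Eq "'f trm" "'f trm"
  | Rl 'r "'f trm list"
  | Neg "('f, 'r) fm"
  | Conj "('f, 'r) fm" "('f, 'r) fm"
  | Ex nat "('f, 'r) fm"

fun wf_trm :: "('f \<Rightarrow> nat) \<Rightarrow> 'f trm \<Rightarrow> bool" where
  "wf_trm fa (Var n) = True"
| "wf_trm fa (Fn f ts) = (length ts = fa f \<and> (\<forall>t\<in>set ts. wf_trm fa t))"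

fun wf_fm :: "('f \<Rightarrow> nat) \<Rightarrow> ('r \<Rightarrow> nat) \<Rightarrow> ('f, 'r) fm \<Rightarrow> bool" where
  "wf_fm fa ra (Eq s t) = (wf_trm fa s \<and> wf_trm fa t)"
| "wf_fm fa ra (Rl r ts) = (length ts = ra r \<and> (\<forall>t\<in>set ts. wf_trm fa t))"
| "wf_fm fa ra (Neg p) = wf_fm fa ra p"
| "wf_fm fa ra (Conj p q) = (wf_fm fa ra p \<and> wf_fm fa ra q)"
| "wf_fm fa ra (Ex n p) = wf_fm fa ra p"

fun fv_trm :: "'f trm \<Rightarrow> nat set" where
  "fv_trm (Var n) = {n}"
| "fv_trm (Fn f ts) = (\<Union>t\<in>set ts. fv_trm t)"

fun fv :: "('f, 'r) fm \<Rightarrow> nat set" where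
  "fv (Eq s t) = fv_trm s \<union> fv_trm t"
| "fv (Rl r ts) = (\<Union>t\<in>set ts. fv_trm t)"
| "fv (Neg p) = fv p"
| "fv (Conj p q) = fv p \<union> fv q"
| "fv (Ex n p) = fv p - {n}"

record ('f, 'r, 'a) struc =
  univ :: "'a set"
  fi :: "'f \<Rightarrow> 'a list \<Rightarrow> 'a"
  ri :: "'r \<Rightarrow> 'a list \<Rightarrow> bool"

definition is_struc :: "('f \<Rightarrow> nat) \<Rightarrow> ('f, 'r, 'a) struc \<Rightarrow> bool" where
  "is_struc fa M \<longleftrightarrow> univ M \<noteq> {} \<and>
     (\<forall>f as. length as = fa f \<and> set as \<subseteq> univ M \<longrightarrow> fi M f as \<in> univ M)"

fun eval :: "('f, 'r, 'a) struc \<Rightarrow> (nat \<Rightarrow> 'a) \<Rightarrow> 'f trm \<Rightarrow> 'a" where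
  "eval M e (Var n) = e n"
| "eval M e (Fn f ts) = fi M f (map (eval M e) ts)"

fun sat :: "('f, 'r, 'a) struc \<Rightarrow> (nat \<Rightarrow> 'a) \<Rightarrow> ('f, 'r) fm \<Rightarrow> bool" where
  "sat M e (Eq s t) = (eval M e s = eval M e t)"
| "sat M e (Rl r ts) = ri M r (map (eval M e) ts)"
| "sat M e (Neg p) = (\<not> sat M e p)"
| "sat M e (Conj p q) = (sat M e p \<and> sat M e q)"
| "sat M e (Ex n p) = (\<exists>a\<in>univ M. sat M (e(n := a)) p)"

definition sentence :: "('f \<Rightarrow> nat) \<Rightarrow> ('r \<Rightarrow> nat) \<Rightarrow> ('f, 'r) fm \<Rightarrow> bool" where
  "sentence fa ra p \<longleftrightarrow> wf_fm fa ra p \<and> fv p = {}"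

definition is_theory :: "('f \<Rightarrow> nat) \<Rightarrow> ('r \<Rightarrow> nat) \<Rightarrow> ('f, 'r) fm set \<Rightarrow> bool" where
  "is_theory fa ra T \<longleftrightarrow> (\<forall>p\<in>T. sentence fa ra p)"

definition is_model :: "('f \<Rightarrow> nat) \<Rightarrow> ('r \<Rightarrow> nat) \<Rightarrow> ('f, 'r) fm set \<Rightarrow> ('f, 'r, 'a) struc \<Rightarrow> bool" where
  "is_model fa ra T M \<longleftrightarrow> is_struc fa M \<and>
     (\<forall>p\<in>T. \<forall>e. range e \<subseteq> univ M \<longrightarrow> sat M e p)"

definition substr :: "('f \<Rightarrow> nat) \<Rightarrow> ('r \<Rightarrow> nat) \<Rightarrow> ('f, 'r, 'a) struc \<Rightarrow> ('f, 'r, 'a) struc \<Rightarrow> bool" where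
  "substr fa ra M N \<longleftrightarrow> is_struc fa M \<and> is_struc fa N \<and> univ M \<subseteq> univ N \<and>
     (\<forall>f as. length as = fa f \<and> set as \<subseteq> univ M \<longrightarrow> fi M f as = fi N f as) \<and>
     (\<forall>r as. length as = ra r \<and> set as \<subseteq> univ M \<longrightarrow> (ri M r as \<longleftrightarrow> ri N r as))"

definition elem_substr :: "('f \<Rightarrow> nat) \<Rightarrow> ('r \<Rightarrow> nat) \<Rightarrow> ('f, 'r, 'a) struc \<Rightarrow> ('f, 'r, 'a) struc \<Rightarrow> bool" where
  "elem_substr fa ra M N \<longleftrightarrow> substr fa ra M N \<and>
     (\<forall>p e. wf_fm fa ra p \<and> range e \<subseteq> univ M \<longrightarrow> (sat M e p \<longleftrightarrow> sat N e p))"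

text \<open>Model completeness: every substructure inclusion between models of T is elementary
  (for structures whose universes live in the type 'a).\<close>
definition model_complete :: "('f \<Rightarrow> nat) \<Rightarrow> ('r \<Rightarrow> nat) \<Rightarrow> ('f, 'r) fm set \<Rightarrow> 'a itself \<Rightarrow> bool" where
  "model_complete fa ra T (_ :: 'a itself) \<longleftrightarrow>
     (\<forall>M N :: ('f, 'r, 'a) struc. is_model fa ra T M \<and> is_model fa ra T N \<and> substr fa ra M N
        \<longrightarrow> elem_substr fa ra M N)"

definition kvs :: "'a set \<Rightarrow> ('a \<Rightarrow> 'a \<Rightarrow> 'a) \<Rightarrow> ('k::field \<Rightarrow> 'a \<Rightarrow> 'a) \<Rightarrow> 'a \<Rightarrow> bool" where
  "kvs V add sm zero \<longleftrightarrow> zero \<in> V \<and>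
     (\<forall>a\<in>V. \<forall>b\<in>V. add a b \<in> V) \<and> (\<forall>k. \<forall>a\<in>V. sm k a \<in> V) \<and>
     (\<forall>a\<in>V. \<forall>b\<in>V. \<forall>c\<in>V. add (add a b) c = add a (add b c)) \<and>
     (\<forall>a\<in>V. \<forall>b\<in>V. add a b = add b a) \<and>
     (\<forall>a\<in>V. add zero a = a) \<and>
     (\<forall>a\<in>V. \<exists>b\<in>V. add a b = zero) \<and>
     (\<forall>k. \<forall>a\<in>V. \<forall>b\<in>V. sm k (add a b) = add (sm k a) (sm k b)) \<and>
     (\<forall>k l. \<forall>a\<in>V. sm (k + l) a = add (sm k a) (sm l a)) \<and>
     (\<forall>k l. \<forall>a\<in>V. sm (k * l) a = sm k (sm l a)) \<and>
     (\<forall>a\<in>V. sm 1 a = a)"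

definition env3 :: "'a \<Rightarrow> 'a \<Rightarrow> 'a \<Rightarrow> nat \<Rightarrow> 'a" where
  "env3 a b c n = (if n = 0 then a else if n = 1 then b else c)"

text \<open>Parameter-free formulas: phiV(x0) defines V, phiAdd(x0,x1,x2) the graph of addition
  (x0 + x1 = x2), phiSm k (x0,x1) the graph of scalar multiplication by k (k x0 = x1).\<close>
definition vs_formulas :: "('f \<Rightarrow> nat) \<Rightarrow> ('r \<Rightarrow> nat) \<Rightarrow> ('f, 'r) fm \<Rightarrow> ('f, 'r) fm \<Rightarrow> ('k \<Rightarrow> ('f, 'r) fm) \<Rightarrow> bool" where
  "vs_formulas fa ra phiV phiAdd phiSm \<longleftrightarrow>
     wf_fm fa ra phiV \<and> fv phiV \<subseteq> {0} \<and>
     wf_fm fa ra phiAdd \<and> fv phiAdd \<subseteq> {0, 1, 2} \<and>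
     (\<forall>k. wf_fm fa ra (phiSm k) \<and> fv (phiSm k) \<subseteq> {0, 1})"

definition vset :: "('f, 'r, 'a) struc \<Rightarrow> ('f, 'r) fm \<Rightarrow> 'a set" where
  "vset M phiV = {a \<in> univ M. sat M (\<lambda>_. a) phiV}"

definition defines_vs :: "('f, 'r, 'a) struc \<Rightarrow> ('f, 'r) fm \<Rightarrow> ('f, 'r) fm \<Rightarrow> ('k::field \<Rightarrow> ('f, 'r) fm)
     \<Rightarrow> ('a \<Rightarrow> 'a \<Rightarrow> 'a) \<Rightarrow> ('k \<Rightarrow> 'a \<Rightarrow> 'a) \<Rightarrow> 'a \<Rightarrow> bool" where
  "defines_vs M phiV phiAdd phiSm add sm zero \<longleftrightarrow>
     (let V = vset M phiV in
       (\<forall>a\<in>V. \<forall>b\<in>V. \<forall>c\<in>univ M. sat M (env3 a b c) phiAdd \<longleftrightarrow> c = add a b) \<and>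
       (\<forall>k. \<forall>a\<in>V. \<forall>b\<in>univ M. sat M (env3 a b b) (phiSm k) \<longleftrightarrow> b = sm k a) \<and>
       kvs V add sm zero \<and> V \<noteq> {zero})"

definition monic_irr :: "'k::field poly \<Rightarrow> bool" where
  "monic_irr f \<longleftrightarrow> lead_coeff f = 1 \<and> irreducible f"

definition polyop :: "('a \<Rightarrow> 'a \<Rightarrow> 'a) \<Rightarrow> ('k::field \<Rightarrow> 'a \<Rightarrow> 'a) \<Rightarrow> 'a \<Rightarrow> ('a \<Rightarrow> 'a) \<Rightarrow> 'k poly \<Rightarrow> 'a \<Rightarrow> 'a" where
  "polyop add sm zero th rho v =
     foldr (\<lambda>i acc. add (sm (coeff rho i) ((th ^^ i) v)) acc) [0..<Suc (degree rho)] zero"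

definition Ker :: "'a set \<Rightarrow> ('a \<Rightarrow> 'a \<Rightarrow> 'a) \<Rightarrow> ('k::field \<Rightarrow> 'a \<Rightarrow> 'a) \<Rightarrow> 'a \<Rightarrow> ('a \<Rightarrow> 'a) \<Rightarrow> 'k poly \<Rightarrow> 'a set" where
  "Ker V add sm zero th rho = {v \<in> V. polyop add sm zero th rho v = zero}"

definition csupp :: "('k::field poly \<Rightarrow> enat) \<Rightarrow> 'k poly set" where
  "csupp c = {f. monic_irr f \<and> c f \<noteq> 0}"

text \<open>Kernel configuration C = (c, d); only the values of c on monic irreducibles matter.\<close>
definition kconf :: "('k::field poly \<Rightarrow> enat) \<Rightarrow> enat \<Rightarrow> bool" where
  "kconf c d \<longleftrightarrow> d > 0 \<and>
     (d = \<infinity> \<or> (finite (csupp c) \<and> d = (\<Sum>f\<in>csupp c. of_nat (degree f) * c f)))"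

definition MiPo :: "('k::field poly \<Rightarrow> enat) \<Rightarrow> 'k poly" where
  "MiPo c = (\<Prod>f\<in>csupp c. f ^ the_enat (c f))"

definition C_endo :: "('k::field poly \<Rightarrow> enat) \<Rightarrow> enat \<Rightarrow> 'a set \<Rightarrow> ('a \<Rightarrow> 'a \<Rightarrow> 'a) \<Rightarrow> ('k \<Rightarrow> 'a \<Rightarrow> 'a) \<Rightarrow> 'a
     \<Rightarrow> ('a \<Rightarrow> 'a) \<Rightarrow> bool" where
  "C_endo c d V add sm zero th \<longleftrightarrow>
     (if d \<noteq> \<infinity> then Ker V add sm zero th (MiPo c) = V
      else (\<forall>f. monic_irr f \<and> c f \<noteq> \<infinity> \<longrightarrow>
              Ker V add sm zero th (f ^ the_enat (c f)) = Ker V add sm zero th (f ^ (the_enat (c f) + 1))))"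

text \<open>An L_theta-structure is an L-structure M together with the interpretation th of theta.\<close>
definition is_struc_th :: "('f \<Rightarrow> nat) \<Rightarrow> ('f, 'r, 'a) struc \<Rightarrow> ('a \<Rightarrow> 'a) \<Rightarrow> bool" where
  "is_struc_th fa M th \<longleftrightarrow> is_struc fa M \<and> (\<forall>x\<in>univ M. th x \<in> univ M)"

definition substr_th :: "('f \<Rightarrow> nat) \<Rightarrow> ('r \<Rightarrow> nat) \<Rightarrow> ('f, 'r, 'a) struc \<Rightarrow> ('a \<Rightarrow> 'a)
     \<Rightarrow> ('f, 'r, 'a) struc \<Rightarrow> ('a \<Rightarrow> 'a) \<Rightarrow> bool" where
  "substr_th fa ra M th N th' \<longleftrightarrow> substr fa ra M N \<and> is_struc_th fa M th \<and> is_struc_th fa N th' \<and>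
     (\<forall>x\<in>univ M. th x = th' x)"

definition model_TC :: "('f \<Rightarrow> nat) \<Rightarrow> ('r \<Rightarrow> nat) \<Rightarrow> ('f, 'r) fm set \<Rightarrow> ('f, 'r) fm \<Rightarrow> ('f, 'r) fm
     \<Rightarrow> ('k::field \<Rightarrow> ('f, 'r) fm) \<Rightarrow> ('k poly \<Rightarrow> enat) \<Rightarrow> enat \<Rightarrow> ('f, 'r, 'a) struc \<Rightarrow> ('a \<Rightarrow> 'a) \<Rightarrow> bool" where
  "model_TC fa ra T phiV phiAdd phiSm c d M th \<longleftrightarrow>
     is_model fa ra T M \<and> is_struc_th fa M th \<and>
     (\<exists>add sm zero. defines_vs M phiV phiAdd phiSm add sm zero \<and>
        (let V = vset M phiV in
          (\<forall>v\<in>V. th v \<in> V) \<and>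
          (\<forall>a\<in>V. \<forall>b\<in>V. th (add a b) = add (th a) (th b)) \<and>
          (\<forall>k. \<forall>a\<in>V. th (sm k a) = sm k (th a)) \<and>
          (\<forall>x\<in>univ M - V. th x = zero) \<and>
          C_endo c d V add sm zero th))"

end

theory Submission
  imports Defs
begin

(* Model completeness makes every link of the chain an elementary extension, so by Tarski's
   elementary chain argument each member is an elementary substructure of the union M, and M is
   a model of T. The formulas defining the vector space therefore define, in each member, the
   trace on that member of the space of M, with the same operations, and the endomorphism of the
   member is the restriction of th. Every axiom about th -- linearity, vanishing off the space,
   and the kernel equalities making it a C-endomorphism -- concerns one point or a pair of
   points at a time, and any two points of M lie in a common member. *)

lemma eval_substr:
  assumes "substr fa ra A B" and "range e \<subseteq> univ A" and "wf_trm fa t"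
  shows "eval A e t = eval B e t \<and> eval A e t \<in> univ A"
  using assms(3)
proof (induction t)
  case (Var n)
  then show ?case using assms(2) by auto
next
  case (Fn f ts)
  then have IH: "\<forall>t\<in>set ts. eval A e t = eval B e t \<and> eval A e t \<in> univ A"
    by (simp only: wf_trm.simps) blast
  then have "map (eval A e) ts = map (eval B e) ts" and "set (map (eval A e) ts) \<subseteq> univ A"
    by (auto simp only: set_map map_eq_conv)
  moreover have "length (map (eval A e) ts) = fa f" using Fn.prems by simp
  ultimately show ?case
    using assms(1) unfolding substr_def is_struc_def by (metis eval.simps(2))
qed

lemma map_eval_substr:
  assumes "substr fa ra A B" and "range e \<subseteq> univ A" and "\<forall>t\<in>set ts. wf_trm fa t"
  shows "map (eval A e) ts = map (eval B e) ts" and "set (map (eval A e) ts) \<subseteq> univ A"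
  using eval_substr[OF assms(1,2)] assms(3) by (auto simp only: set_map map_eq_conv)

lemma sat_atomic_substr:
  assumes "substr fa ra A B" and "range e \<subseteq> univ A"
  shows "wf_fm fa ra (Eq s t) \<Longrightarrow> sat A e (Eq s t) = sat B e (Eq s t)"
    and "wf_fm fa ra (Rl r ts) \<Longrightarrow> sat A e (Rl r ts) = sat B e (Rl r ts)"
proof -
  show "wf_fm fa ra (Eq s t) \<Longrightarrow> sat A e (Eq s t) = sat B e (Eq s t)"
    using eval_substr[OF assms, of s] eval_substr[OF assms, of t] by simp
next
  assume wf: "wf_fm fa ra (Rl r ts)"
  then have "ri A r (map (eval A e) ts) = ri B r (map (eval A e) ts)"
    using map_eval_substr(2)[OF assms] assms(1) unfolding substr_def by simp
  moreover have "map (eval A e) ts = map (eval B e) ts"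
    by (rule map_eval_substr(1)[OF assms]) (use wf in simp)
  ultimately show "sat A e (Rl r ts) = sat B e (Rl r ts)"
    by (simp only: sat.simps)
qed

lemma eval_fv_cong: "(\<forall>x\<in>fv_trm t. e x = e' x) \<Longrightarrow> eval M e t = eval M e' t"
  by (induction t) (auto intro!: arg_cong[where f="fi M _"])

lemma sat_fv_cong: "(\<forall>x\<in>fv p. e x = e' x) \<Longrightarrow> sat M e p = sat M e' p"
proof (induction p arbitrary: e e')
  case (Eq s t)
  then show ?case using eval_fv_cong[of s e e' M] eval_fv_cong[of t e e' M] by simp
next
  case (Rl r ts)
  then have "map (eval M e) ts = map (eval M e') ts"
    using eval_fv_cong[of _ e e' M] by auto
  then show ?case by (simp only: sat.simps)
next
  case (Conj p q)
  then show ?case by (metis Un_iff fv.simps(4) sat.simps(4))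
next
  case (Ex n p)
  then have "sat M (e(n := a)) p = sat M (e'(n := a)) p" for a by auto
  then show ?case by simp
qed auto

lemma substr_univ_subset: "substr fa ra A B \<Longrightarrow> univ A \<subseteq> univ B"
  unfolding substr_def by simp

definition substr_chain ::
    "('f \<Rightarrow> nat) \<Rightarrow> ('r \<Rightarrow> nat) \<Rightarrow> 'i set \<Rightarrow> ('i \<Rightarrow> ('f, 'r, 'a) struc) \<Rightarrow> bool" where
  "substr_chain fa ra I Ms \<longleftrightarrow>
    (\<forall>i\<in>I. \<forall>j\<in>I. substr fa ra (Ms i) (Ms j) \<or> substr fa ra (Ms j) (Ms i))"

lemma substr_chain_upper_bound:
  assumes "substr_chain fa ra I Ms" and "i \<in> I" and "j \<in> I"
  obtains k where "k \<in> I" and "substr fa ra (Ms i) (Ms k)" and "substr fa ra (Ms j) (Ms k)"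
proof -
  have refl: "substr fa ra (Ms l) (Ms l)" if "l \<in> I" for l
    using assms(1) that unfolding substr_chain_def by blast
  show thesis
  proof (cases "substr fa ra (Ms i) (Ms j)")
    case True
    then show thesis using that assms(3) refl by blast
  next
    case False
    then have "substr fa ra (Ms j) (Ms i)" using assms unfolding substr_chain_def by blast
    then show thesis using that assms(2) refl by blast
  qed
qed

lemma substr_chain_directed:
  assumes "substr_chain fa ra I Ms"
    and "x \<in> (\<Union>i\<in>I. univ (Ms i))" and "y \<in> (\<Union>i\<in>I. univ (Ms i))"
  shows "\<exists>k\<in>I. x \<in> univ (Ms k) \<and> y \<in> univ (Ms k)"
proof -
  obtain i j where "i \<in> I" "j \<in> I" "x \<in> univ (Ms i)" "y \<in> univ (Ms j)"
    using assms(2,3) by blast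
  moreover from substr_chain_upper_bound[OF assms(1) this(1,2)] obtain k where
    "k \<in> I" "univ (Ms i) \<subseteq> univ (Ms k)" "univ (Ms j) \<subseteq> univ (Ms k)"
    by (metis substr_univ_subset)
  ultimately show ?thesis by blast
qed

lemma sat_union_of_chain:
  fixes M :: "('f, 'r, 'a) struc"
  assumes mc: "model_complete fa ra T TYPE('a)"
    and chain: "substr_chain fa ra I Ms"
    and models: "\<forall>i\<in>I. is_model fa ra T (Ms i)"
    and union: "univ M = (\<Union>i\<in>I. univ (Ms i))"
    and sub: "\<forall>i\<in>I. substr fa ra (Ms i) M"
    and "wf_fm fa ra p" and "i \<in> I" and "range e \<subseteq> univ (Ms i)"
  shows "sat (Ms i) e p \<longleftrightarrow> sat M e p"
  using assms(6-8)
proof (induction p arbitrary: i e)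
  case (Eq s t)
  then show ?case using sub sat_atomic_substr(1) by metis
next
  case (Rl r ts)
  then show ?case using sub sat_atomic_substr(2) by metis
next
  case (Neg p)
  then show ?case by simp
next
  case (Conj p q)
  then show ?case by simp
next
  case (Ex n p)
  note i = \<open>i \<in> I\<close> and e = \<open>range e \<subseteq> univ (Ms i)\<close>
  have wf: "wf_fm fa ra p" using Ex.prems(1) by simp
  show ?case
  proof
    assume "sat (Ms i) e (Ex n p)"
    then obtain a where a: "a \<in> univ (Ms i)" and "sat (Ms i) (e(n := a)) p" by auto
    moreover from a e have "range (e(n := a)) \<subseteq> univ (Ms i)" by auto
    ultimately have "sat M (e(n := a)) p" using Ex.IH[OF wf i] by blast
    moreover have "a \<in> univ M" using a i sub substr_univ_subset by blast
    ultimately show "sat M e (Ex n p)" by auto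
  next
    assume "sat M e (Ex n p)"
    then obtain a where "a \<in> univ M" and a: "sat M (e(n := a)) p" by auto
    then obtain j where j: "j \<in> I" and aj: "a \<in> univ (Ms j)" using union by auto
    obtain k where k: "k \<in> I" "substr fa ra (Ms i) (Ms k)" "substr fa ra (Ms j) (Ms k)"
      using substr_chain_upper_bound[OF chain i j] .
    with aj have ak: "a \<in> univ (Ms k)" using substr_univ_subset by blast
    have "range e \<subseteq> univ (Ms k)" using k(2) e substr_univ_subset by blast
    with ak have "range (e(n := a)) \<subseteq> univ (Ms k)" by auto
    then have "sat (Ms k) (e(n := a)) p" using Ex.IH[OF wf k(1)] a by blast
    with ak have "sat (Ms k) e (Ex n p)" by auto
    moreover have "elem_substr fa ra (Ms i) (Ms k)"
      using mc models i k unfolding model_complete_def by blast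
    ultimately show "sat (Ms i) e (Ex n p)" using e Ex.prems(1) unfolding elem_substr_def by blast
  qed
qed

lemma elem_substr_union_of_chain:
  fixes M :: "('f, 'r, 'a) struc"
  assumes "model_complete fa ra T TYPE('a)"
    and "substr_chain fa ra I Ms"
    and "\<forall>i\<in>I. is_model fa ra T (Ms i)"
    and "univ M = (\<Union>i\<in>I. univ (Ms i))"
    and "\<forall>i\<in>I. substr fa ra (Ms i) M"
    and "i \<in> I"
  shows "elem_substr fa ra (Ms i) M"
  using sat_union_of_chain[OF assms(1-5) _ assms(6)] assms(5,6) unfolding elem_substr_def by blast

lemma is_model_elem_substr:
  fixes M :: "('f, 'r, 'a) struc"
  assumes "is_theory fa ra T" and "is_model fa ra T N" and "elem_substr fa ra N M"
  shows "is_model fa ra T M"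
  unfolding is_model_def
proof (intro conjI ballI allI impI)
  show "is_struc fa M" using assms(3) unfolding elem_substr_def substr_def by blast
next
  fix p and e :: "nat \<Rightarrow> 'a" assume p: "p \<in> T" and "range e \<subseteq> univ M"
  obtain x where x: "x \<in> univ N" using assms(2) unfolding is_model_def is_struc_def by blast
  have p_sentence: "wf_fm fa ra p" "fv p = {}"
    using assms(1) p unfolding is_theory_def sentence_def by auto
  have "sat N (\<lambda>_. x) p" using assms(2) p x unfolding is_model_def by auto
  then have "sat M (\<lambda>_. x) p"
    using assms(3) x p_sentence(1) unfolding elem_substr_def by auto
  then show "sat M e p"
    using sat_fv_cong[of p e "\<lambda>_. x" M] p_sentence(2) by simp
qed

lemma kvs_closed:
  assumes "kvs V add sm zero"
  shows "zero \<in> V" and "\<lbrakk>a \<in> V; b \<in> V\<rbrakk> \<Longrightarrow> add a b \<in> V"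
    and "a \<in> V \<Longrightarrow> sm k a \<in> V"
  using assms unfolding kvs_def by auto

lemma kvs_idempotent_eq_zero:
  assumes kvs: "kvs V add sm zero" and z: "z \<in> V" and idem: "add z z = z"
  shows "z = zero"
proof -
  have "\<forall>a\<in>V. \<exists>b\<in>V. add a b = zero" using kvs unfolding kvs_def by simp
  then obtain b where b: "b \<in> V" "add z b = zero" using z by blast
  have assoc: "add (add z z) b = add z (add z b)"
    using kvs z b(1) unfolding kvs_def by blast
  have neutral: "add z zero = z"
    using kvs z unfolding kvs_def by metis
  have "zero = add (add z z) b" using b(2) idem by simp
  also have "\<dots> = z" using assoc b(2) neutral by simp
  finally show ?thesis by simp
qed

lemma defines_vsD:
  assumes "defines_vs M phiV phiAdd phiSm add sm zero"
  shows "\<lbrakk>a \<in> vset M phiV; b \<in> vset M phiV; c \<in> univ M\<rbrakk>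
      \<Longrightarrow> sat M (env3 a b c) phiAdd \<longleftrightarrow> c = add a b"
    and "\<lbrakk>a \<in> vset M phiV; b \<in> univ M\<rbrakk> \<Longrightarrow> sat M (env3 a b b) (phiSm k) \<longleftrightarrow> b = sm k a"
    and "kvs (vset M phiV) add sm zero"
  using assms unfolding defines_vs_def Let_def by auto

lemma vset_elem_substr:
  assumes "elem_substr fa ra N M" and "wf_fm fa ra phiV"
  shows "vset N phiV = vset M phiV \<inter> univ N"
proof -
  have "sat N (\<lambda>_. x) phiV \<longleftrightarrow> sat M (\<lambda>_. x) phiV" if "x \<in> univ N" for x
    using assms that unfolding elem_substr_def by auto
  moreover have "univ N \<subseteq> univ M"
    using assms(1) substr_univ_subset unfolding elem_substr_def by blast
  ultimately show ?thesis unfolding vset_def by auto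
qed

lemma sat_env3_elem_substr:
  assumes "elem_substr fa ra N M" and "wf_fm fa ra p"
    and "a \<in> univ N" and "b \<in> univ N" and "c \<in> univ N"
  shows "sat N (env3 a b c) p \<longleftrightarrow> sat M (env3 a b c) p"
proof -
  have "range (env3 a b c) \<subseteq> univ N" using assms(3-5) unfolding env3_def by auto
  then show ?thesis using assms(1,2) unfolding elem_substr_def by blast
qed

lemma defines_vs_elem_substr:
  assumes elem: "elem_substr fa ra N M" and wf: "vs_formulas fa ra phiV phiAdd phiSm"
    and dN: "defines_vs N phiV phiAdd phiSm add' sm' zero'"
    and dM: "defines_vs M phiV phiAdd phiSm add sm zero"
  shows "\<forall>a\<in>vset N phiV. \<forall>b\<in>vset N phiV. add a b = add' a b"
    and "\<forall>k. \<forall>a\<in>vset N phiV. sm k a = sm' k a"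
    and "zero' = zero"
proof -
  let ?W = "vset N phiV"
  note kvsN = defines_vsD(3)[OF dN]
  have W_sub: "?W \<subseteq> vset M phiV" and W_univ: "?W \<subseteq> univ N"
    using vset_elem_substr[OF elem] wf unfolding vs_formulas_def by auto
  have "univ N \<subseteq> univ M" using elem substr_univ_subset unfolding elem_substr_def by blast
  show add_eq: "\<forall>a\<in>?W. \<forall>b\<in>?W. add a b = add' a b"
  proof (intro ballI)
    fix a b assume ab: "a \<in> ?W" "b \<in> ?W"
    then have sum: "add' a b \<in> ?W" using kvs_closed(2)[OF kvsN] by blast
    then have "sat N (env3 a b (add' a b)) phiAdd"
      using defines_vsD(1)[OF dN ab] W_univ by blast
    then have "sat M (env3 a b (add' a b)) phiAdd"
      using sat_env3_elem_substr[OF elem] ab sum W_univ wf unfolding vs_formulas_def by blast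
    then show "add a b = add' a b"
      using defines_vsD(1)[OF dM] ab sum W_sub W_univ \<open>univ N \<subseteq> univ M\<close>
      by (metis subsetD)
  qed
  show "\<forall>k. \<forall>a\<in>?W. sm k a = sm' k a"
  proof (intro allI ballI)
    fix k a assume a: "a \<in> ?W"
    then have prod: "sm' k a \<in> ?W" using kvs_closed(3)[OF kvsN] by blast
    then have "sat N (env3 a (sm' k a) (sm' k a)) (phiSm k)"
      using defines_vsD(2)[OF dN a] W_univ by blast
    then have "sat M (env3 a (sm' k a) (sm' k a)) (phiSm k)"
      using sat_env3_elem_substr[OF elem] a prod W_univ wf unfolding vs_formulas_def by blast
    then show "sm k a = sm' k a"
      using defines_vsD(2)[OF dM] a prod W_sub W_univ \<open>univ N \<subseteq> univ M\<close>
      by (metis subsetD)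
  qed
  have "zero' \<in> ?W" using kvs_closed(1)[OF kvsN] .
  moreover have "add' zero' zero' = zero'"
    using kvsN \<open>zero' \<in> ?W\<close> unfolding kvs_def by simp
  ultimately show "zero' = zero"
    using kvs_idempotent_eq_zero[OF defines_vsD(3)[OF dM]] add_eq W_sub by auto
qed

definition theta_axioms :: "('k::field poly \<Rightarrow> enat) \<Rightarrow> enat \<Rightarrow> 'a set \<Rightarrow> 'a set
    \<Rightarrow> ('a \<Rightarrow> 'a \<Rightarrow> 'a) \<Rightarrow> ('k \<Rightarrow> 'a \<Rightarrow> 'a) \<Rightarrow> 'a \<Rightarrow> ('a \<Rightarrow> 'a) \<Rightarrow> bool" where
  "theta_axioms c d U V add sm zero th \<longleftrightarrow>
     (\<forall>v\<in>V. th v \<in> V) \<and>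
     (\<forall>a\<in>V. \<forall>b\<in>V. th (add a b) = add (th a) (th b)) \<and>
     (\<forall>k. \<forall>a\<in>V. th (sm k a) = sm k (th a)) \<and>
     (\<forall>x\<in>U - V. th x = zero) \<and>
     C_endo c d V add sm zero th"

lemma model_TC_iff_theta_axioms:
  "model_TC fa ra T phiV phiAdd phiSm c d M th \<longleftrightarrow>
     is_model fa ra T M \<and> is_struc_th fa M th \<and>
     (\<exists>add sm zero. defines_vs M phiV phiAdd phiSm add sm zero \<and>
        theta_axioms c d (univ M) (vset M phiV) add sm zero th)"
  unfolding model_TC_def theta_axioms_def Let_def by simp

lemma polyop_cong:
  assumes th_closed: "\<forall>v\<in>V. th v \<in> V"
    and add_closed: "\<forall>a\<in>V. \<forall>b\<in>V. add a b \<in> V"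
    and sm_closed: "\<forall>k. \<forall>a\<in>V. sm k a \<in> V"
    and "zero \<in> V"
    and th_eq: "\<forall>v\<in>V. th' v = th v"
    and add_eq: "\<forall>a\<in>V. \<forall>b\<in>V. add' a b = add a b"
    and sm_eq: "\<forall>k. \<forall>a\<in>V. sm' k a = sm k a"
    and "v \<in> V"
  shows "polyop add' sm' zero th' rho v = polyop add sm zero th rho v"
proof -
  have iter: "(th' ^^ n) v = (th ^^ n) v \<and> (th ^^ n) v \<in> V" for n
    by (induction n) (use th_closed th_eq \<open>v \<in> V\<close> in auto)
  have "foldr (\<lambda>i acc. add' (sm' (coeff rho i) ((th' ^^ i) v)) acc) xs zero
      = foldr (\<lambda>i acc. add (sm (coeff rho i) ((th ^^ i) v)) acc) xs zero \<and>
      foldr (\<lambda>i acc. add (sm (coeff rho i) ((th ^^ i) v)) acc) xs zero \<in> V" for xs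
  proof (induction xs)
    case Nil
    then show ?case using \<open>zero \<in> V\<close> by simp
  next
    case (Cons i xs)
    have "sm' (coeff rho i) ((th' ^^ i) v) = sm (coeff rho i) ((th ^^ i) v)"
      and "sm (coeff rho i) ((th ^^ i) v) \<in> V"
      using iter[of i] sm_eq sm_closed by auto
    then show ?case using Cons add_eq add_closed by simp
  qed
  then show ?thesis unfolding polyop_def by blast
qed

lemma C_endo_cong:
  assumes "kvs V add sm zero" and "\<forall>v\<in>V. th v \<in> V"
    and "\<forall>v\<in>V. th' v = th v"
    and "\<forall>a\<in>V. \<forall>b\<in>V. add' a b = add a b"
    and "\<forall>k. \<forall>a\<in>V. sm' k a = sm k a"
  shows "C_endo c d V add' sm' zero th' \<longleftrightarrow> C_endo c d V add sm zero th"
proof -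
  have closed: "\<forall>a\<in>V. \<forall>b\<in>V. add a b \<in> V" "\<forall>k. \<forall>a\<in>V. sm k a \<in> V" "zero \<in> V"
    using kvs_closed[OF assms(1)] by auto
  have "Ker V add' sm' zero th' rho = Ker V add sm zero th rho" for rho
    using polyop_cong[OF assms(2) closed assms(3-5)] unfolding Ker_def by auto
  then show ?thesis unfolding C_endo_def by simp
qed

lemma theta_axioms_cong:
  assumes kvs: "kvs V add' sm' zero" and "V \<subseteq> U"
    and th_eq: "\<forall>x\<in>U. th x = th' x"
    and add_eq: "\<forall>a\<in>V. \<forall>b\<in>V. add a b = add' a b"
    and sm_eq: "\<forall>k. \<forall>a\<in>V. sm k a = sm' k a"
    and axioms': "theta_axioms c d U V add' sm' zero th'"
  shows "theta_axioms c d U V add sm zero th"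
proof -
  have th_closed: "\<forall>v\<in>V. th' v \<in> V"
    using axioms' unfolding theta_axioms_def by blast
  have th_eq_V: "\<forall>v\<in>V. th v = th' v" using th_eq \<open>V \<subseteq> U\<close> by blast
  have "th (add a b) = add (th a) (th b)" if "a \<in> V" "b \<in> V" for a b
  proof -
    have "th (add a b) = th' (add' a b)"
      using that add_eq th_eq_V kvs_closed(2)[OF kvs] by simp
    also have "\<dots> = add' (th' a) (th' b)"
      using that axioms' unfolding theta_axioms_def by blast
    also have "\<dots> = add (th a) (th b)" using that add_eq th_eq_V th_closed by simp
    finally show ?thesis .
  qed
  moreover have "th (sm k a) = sm k (th a)" if "a \<in> V" for k a
  proof -
    have "th (sm k a) = th' (sm' k a)" using that sm_eq th_eq_V kvs_closed(3)[OF kvs] by simp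
    also have "\<dots> = sm' k (th' a)" using that axioms' unfolding theta_axioms_def by blast
    also have "\<dots> = sm k (th a)" using that sm_eq th_eq_V th_closed by simp
    finally show ?thesis .
  qed
  moreover have "C_endo c d V add sm zero th"
    using C_endo_cong[OF kvs th_closed th_eq_V add_eq sm_eq] axioms'
    unfolding theta_axioms_def by blast
  moreover have "\<forall>v\<in>V. th v \<in> V" using th_closed th_eq_V by simp
  moreover have "\<forall>x\<in>U - V. th x = zero" using axioms' th_eq unfolding theta_axioms_def by simp
  ultimately show ?thesis unfolding theta_axioms_def by blast
qed

lemma Ker_UN:
  "Ker (\<Union>i\<in>I. W i) add sm zero th rho = (\<Union>i\<in>I. Ker (W i) add sm zero th rho)"
  unfolding Ker_def by blast

lemma C_endo_UN:
  assumes "\<forall>i\<in>I. C_endo c d (W i) add sm zero th"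
  shows "C_endo c d (\<Union>i\<in>I. W i) add sm zero th"
  using assms unfolding C_endo_def Ker_UN by (cases "d = \<infinity>") auto

lemma theta_axioms_UN:
  assumes union: "U = (\<Union>i\<in>I. U' i)" and "V \<subseteq> U"
    and restrict: "\<forall>i\<in>I. V' i = V \<inter> U' i"
    and directed: "\<forall>x\<in>U. \<forall>y\<in>U. \<exists>i\<in>I. x \<in> U' i \<and> y \<in> U' i"
    and local: "\<forall>i\<in>I. theta_axioms c d (U' i) (V' i) add sm zero th"
  shows "theta_axioms c d U V add sm zero th"
proof -
  have V_UN: "V = (\<Union>i\<in>I. V' i)" using union restrict \<open>V \<subseteq> U\<close> by blast
  have common: "\<exists>i\<in>I. a \<in> V' i \<and> b \<in> V' i" if "a \<in> V" "b \<in> V" for a b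
    using directed restrict that \<open>V \<subseteq> U\<close> by blast
  have "th v \<in> V" if "v \<in> V" for v
  proof -
    obtain i where "i \<in> I" "v \<in> V' i" using V_UN \<open>v \<in> V\<close> by blast
    then have "th v \<in> V' i" using local unfolding theta_axioms_def by blast
    then show ?thesis using \<open>i \<in> I\<close> restrict by blast
  qed
  moreover have "th (add a b) = add (th a) (th b)" if ab: "a \<in> V" "b \<in> V" for a b
  proof -
    obtain i where "i \<in> I" "a \<in> V' i" "b \<in> V' i" using common[OF ab] by blast
    then show ?thesis using local unfolding theta_axioms_def by blast
  qed
  moreover have "th (sm k a) = sm k (th a)" if a: "a \<in> V" for k a
  proof -
    obtain i where "i \<in> I" "a \<in> V' i" using V_UN a by blast
    then show ?thesis using local unfolding theta_axioms_def by blast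
  qed
  moreover have "th x = zero" if x: "x \<in> U - V" for x
  proof -
    obtain i where "i \<in> I" "x \<in> U' i - V' i" using union restrict x by blast
    then show ?thesis using local unfolding theta_axioms_def by blast
  qed
  moreover have "C_endo c d V add sm zero th"
    unfolding V_UN by (rule C_endo_UN) (use local in \<open>simp add: theta_axioms_def\<close>)
  ultimately show ?thesis unfolding theta_axioms_def by blast
qed

lemma theta_axioms_elem_substr:
  assumes elem: "elem_substr fa ra N M" and wf: "vs_formulas fa ra phiV phiAdd phiSm"
    and "model_TC fa ra T phiV phiAdd phiSm c d N thN"
    and dM: "defines_vs M phiV phiAdd phiSm add sm zero"
    and th_eq: "\<forall>x\<in>univ N. th x = thN x"
  shows "theta_axioms c d (univ N) (vset N phiV) add sm zero th"
proof -
  obtain add' sm' zero' where dN: "defines_vs N phiV phiAdd phiSm add' sm' zero'"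
    and axioms': "theta_axioms c d (univ N) (vset N phiV) add' sm' zero' thN"
    using assms(3) unfolding model_TC_iff_theta_axioms by blast
  note agree = defines_vs_elem_substr[OF elem wf dN dM]
  have kvs: "kvs (vset N phiV) add' sm' zero"
    using defines_vsD(3)[OF dN] agree(3) by simp
  have "vset N phiV \<subseteq> univ N" unfolding vset_def by blast
  moreover have "theta_axioms c d (univ N) (vset N phiV) add' sm' zero thN"
    using axioms' agree(3) by simp
  ultimately show ?thesis using theta_axioms_cong[OF kvs _ th_eq agree(1,2)] by blast
qed

theorem lemma2p18:
  fixes fa :: "'f \<Rightarrow> nat" and ra :: "'r \<Rightarrow> nat" and T :: "('f, 'r) fm set"
    and phiV phiAdd :: "('f, 'r) fm" and phiSm :: "'k::field \<Rightarrow> ('f, 'r) fm"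
    and c :: "'k poly \<Rightarrow> enat" and d :: enat
    and I :: "'i set" and Ms :: "'i \<Rightarrow> ('f, 'r, 'a) struc" and ths :: "'i \<Rightarrow> 'a \<Rightarrow> 'a"
    and M :: "('f, 'r, 'a) struc" and th :: "'a \<Rightarrow> 'a"
  assumes "is_theory fa ra T"
    and "model_complete fa ra T TYPE('a)"
    and "vs_formulas fa ra phiV phiAdd phiSm"
    and "\<forall>N :: ('f, 'r, 'a) struc. is_model fa ra T N \<longrightarrow>
           (\<exists>add sm zero. defines_vs N phiV phiAdd phiSm add sm zero)"
    and "kconf c d"
    and "I \<noteq> {}"
    and "\<forall>i\<in>I. \<forall>j\<in>I. substr_th fa ra (Ms i) (ths i) (Ms j) (ths j) \<or>
                       substr_th fa ra (Ms j) (ths j) (Ms i) (ths i)"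
    and "\<forall>i\<in>I. model_TC fa ra T phiV phiAdd phiSm c d (Ms i) (ths i)"
    and "univ M = (\<Union>i\<in>I. univ (Ms i))"
    and "\<forall>i\<in>I. substr_th fa ra (Ms i) (ths i) M th"
  shows "model_TC fa ra T phiV phiAdd phiSm c d M th"
proof -
  have chain: "substr_chain fa ra I Ms"
    using assms(7) unfolding substr_chain_def substr_th_def by blast
  have models: "\<forall>i\<in>I. is_model fa ra T (Ms i)"
    using assms(8) unfolding model_TC_def by blast
  have sub: "\<forall>i\<in>I. substr fa ra (Ms i) M"
    and th_ext: "\<forall>i\<in>I. \<forall>x\<in>univ (Ms i). th x = ths i x"
    using assms(10) unfolding substr_th_def by auto
  have elem: "elem_substr fa ra (Ms i) M" if "i \<in> I" for i
    using elem_substr_union_of_chain[OF assms(2) chain models assms(9) sub that] .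
  obtain i0 where "i0 \<in> I" using assms(6) by blast
  have model: "is_model fa ra T M"
    using is_model_elem_substr[OF assms(1)] models elem \<open>i0 \<in> I\<close> by blast
  moreover have "is_struc_th fa M th"
    using assms(10) \<open>i0 \<in> I\<close> unfolding substr_th_def by blast
  moreover obtain add sm zero where dM: "defines_vs M phiV phiAdd phiSm add sm zero"
    using assms(4) model by blast
  moreover have "theta_axioms c d (univ M) (vset M phiV) add sm zero th"
  proof (rule theta_axioms_UN[OF assms(9)])
    show "vset M phiV \<subseteq> univ M" unfolding vset_def by blast
    show "\<forall>i\<in>I. vset (Ms i) phiV = vset M phiV \<inter> univ (Ms i)"
      using vset_elem_substr elem assms(3) unfolding vs_formulas_def by blast
    show "\<forall>x\<in>univ M. \<forall>y\<in>univ M. \<exists>i\<in>I. x \<in> univ (Ms i) \<and> y \<in> univ (Ms i)"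
      unfolding assms(9) using substr_chain_directed[OF chain] by blast
    show "\<forall>i\<in>I. theta_axioms c d (univ (Ms i)) (vset (Ms i) phiV) add sm zero th"
      using theta_axioms_elem_substr[OF elem assms(3) _ dM] assms(8) th_ext by blast
  qed
  ultimately show ?thesis unfolding model_TC_iff_theta_axioms by blast
qed

end
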